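(* Let $(X,Y,Z,W)$ be a solution of system (S) on an interval $(-\infty,t_{max})$. Assume $\lim_{t\to-\infty}(X,Y,Z,W)(t)=(0,0,1,0)$ and $\left|\int_{-\infty}^{T_0}X(t)\,dt\right|<\infty$ for some $T_0$ in the interval. Normalize $g$ so that $g(t)=\lambda e^{\int_{-\infty}^tX(\tau)d\tau}$ with $\lambda>0$, and suppose $Y(t_0)>0$ for some $t_0$. Then $\mathcal L$ is strictly increasing, $\mathcal L>0$, and $0<\int_{-\infty}^{T_0}\mathcal L(t)\,dt<\infty$.
   Context: Fix a positive integer $d$ and a real number $q$. Put $A_2=d(d+2)$ and $A_3=\tfrac14 d(d+2)^2q^2$. System (S) is $$X'=X(dX^2+Z^2-1)+\tfrac{A_2}{d}Y^2-2\tfrac{A_3}{d}W^2,\qquad Y'=Y(dX^2+Z^2-X),$$ $$Z'=Z(dX^2+Z^2-1)+A_3W^2,\qquad W'=W(dX^2+Z^2-2X+Z).$$ For a solution, $g$ denotes a solution of $g'=gX$, determined up to a multiplicative constant, and $\mathcal L=gY$. When $\int_{-\infty}^{T}X\,dt$ is finite, $\lambda:=\lim_{t\to-\infty}g(t)$ exists, and the normalization of $g$ is fixed by choosing $\lambda$. *)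

theory Defs
  imports "HOL-Analysis.Analysis"
begin

definition A2 :: "nat \<Rightarrow> real" where
  "A2 d = real d * (real d + 2)"

definition A3 :: "nat \<Rightarrow> real \<Rightarrow> real" where
  "A3 d q = (1/4) * real d * (real d + 2)^2 * q^2"

definition solves_S :: "nat \<Rightarrow> real \<Rightarrow> real set \<Rightarrow>
    (real \<Rightarrow> real) \<Rightarrow> (real \<Rightarrow> real) \<Rightarrow> (real \<Rightarrow> real) \<Rightarrow> (real \<Rightarrow> real) \<Rightarrow> bool" where
  "solves_S d q I X Y Z W \<longleftrightarrow> (\<forall>t\<in>I.
     (X has_real_derivative
        X t * (real d * (X t)^2 + (Z t)^2 - 1) + A2 d / real d * (Y t)^2
          - 2 * A3 d q / real d * (W t)^2) (at t) \<and>
     (Y has_real_derivative Y t * (real d * (X t)^2 + (Z t)^2 - X t)) (at t) \<and>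
     (Z has_real_derivative
        Z t * (real d * (X t)^2 + (Z t)^2 - 1) + A3 d q * (W t)^2) (at t) \<and>
     (W has_real_derivative
        W t * (real d * (X t)^2 + (Z t)^2 - 2 * X t + Z t)) (at t))"

definition int_minf :: "(real \<Rightarrow> real) \<Rightarrow> real \<Rightarrow> real" where
  "int_minf f t = Lim at_bot (\<lambda>s. integral {s..t} f)"

definition int_minf_converges :: "(real \<Rightarrow> real) \<Rightarrow> real \<Rightarrow> bool" where
  "int_minf_converges f t \<longleftrightarrow> (\<exists>c. ((\<lambda>s. integral {s..t} f) \<longlongrightarrow> c) at_bot)"

end

theory Submission
  imports Defs
begin

text \<open>Since \<open>g' = g X\<close> and \<open>Y' = Y (d X\<^sup>2 + Z\<^sup>2 - X)\<close>, the product \<open>L = g Y\<close>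
satisfies the linear equation \<open>L' = L (d X\<^sup>2 + Z\<^sup>2)\<close>. The equation for \<open>Y\<close> is linear too,
so \<open>Y\<close>, and with it \<open>L\<close>, stays positive, and \<open>L\<close> is nondecreasing. It is strictly increasing
because \<open>d X\<^sup>2 + Z\<^sup>2\<close> cannot vanish on an interval: there \<open>X = Z = 0\<close>, so the equation
for \<open>Z\<close> forces \<open>A\<^sub>3 W\<^sup>2 = 0\<close> and then \<open>X' = (A\<^sub>2/d) Y\<^sup>2 > 0\<close>. Near \<open>-\<infinity>\<close>, \<open>Z \<rightarrow> 1\<close>
gives \<open>d X\<^sup>2 + Z\<^sup>2 \<ge> 1/2\<close>, hence \<open>L \<le> 2 L'\<close> and \<open>\<integral>\<^sub>s\<^sup>T L \<le> 2 L(T)\<close>: the improper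
integral of the positive function \<open>L\<close> converges to a positive value.\<close>

lemma atLeastAtMost_subset_interval:
  fixes S :: "real set"
  assumes "is_interval S" "x \<in> S" "y \<in> S"
  shows "{x..y} \<subseteq> S"
proof
  fix z assume "z \<in> {x..y}"
  then show "z \<in> S" using assms unfolding is_interval_1 atLeastAtMost_iff by blast
qed

lemma linear_ode_pos:
  fixes f b :: "real \<Rightarrow> real"
  assumes S: "is_interval S"
    and der: "\<And>x. x \<in> S \<Longrightarrow> (f has_real_derivative f x * b x) (at x)"
    and b: "continuous_on S b" and x: "x \<in> S" and y: "y \<in> S" and fx: "f x > 0"
  shows "f y > 0"
proof -
  define K where "K = {min x y..max x y}"
  have "min x y \<in> S" "max x y \<in> S"
    using x y by (simp_all add: min_def max_def)
  then have K: "K \<subseteq> S" "x \<in> K" "y \<in> K"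
    unfolding K_def by (simp_all add: atLeastAtMost_subset_interval[OF S])
  define B where "B u = integral {min x y..u} b" for u
  define h where "h u = f u * exp (- B u)" for u
  have "(h has_real_derivative 0) (at u within K)" if u: "u \<in> K" for u
  proof -
    have "(B has_real_derivative b u) (at u within K)"
      unfolding B_def K_def
      by (rule integral_has_real_derivative) (use continuous_on_subset[OF b K(1)] u in \<open>auto simp: K_def\<close>)
    then have eK: "((\<lambda>u. exp (- B u)) has_real_derivative exp (- B u) * - b u) (at u within K)"
      by (rule DERIV_chain2[OF DERIV_exp DERIV_minus])
    have fK: "(f has_real_derivative f u * b u) (at u within K)"
      using der K(1) u by (blast intro: has_field_derivative_at_within)
    have "(h has_real_derivative f u * b u * exp (- B u) + exp (- B u) * - b u * f u) (at u within K)"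
      unfolding h_def by (rule DERIV_mult[OF fK eK])
    then show ?thesis by (simp add: algebra_simps)
  qed
  then obtain c where "\<forall>u\<in>K. h u = c"
    using has_field_derivative_zero_constant[of K h] unfolding K_def by blast
  then have "h y = h x" using K by simp
  with fx have "h y > 0" by (simp add: h_def)
  then show ?thesis by (simp add: h_def zero_less_mult_iff)
qed

lemma strict_mono_on_if_deriv_nonneg:
  fixes f f' :: "real \<Rightarrow> real"
  assumes S: "is_interval S"
    and der: "\<And>x. x \<in> S \<Longrightarrow> (f has_real_derivative f' x) (at x)"
    and nonneg: "\<And>x. x \<in> S \<Longrightarrow> 0 \<le> f' x"
    and nonvanishing: "\<And>x y. x \<in> S \<Longrightarrow> y \<in> S \<Longrightarrow> x < y \<Longrightarrow> \<exists>u\<in>{x<..<y}. f' u \<noteq> 0"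
  shows "strict_mono_on S f"
proof (rule strict_mono_onI)
  fix x y assume x: "x \<in> S" and y: "y \<in> S" and "x < y"
  have xy: "{x..y} \<subseteq> S" using atLeastAtMost_subset_interval[OF S x y] .
  have mono: "f u \<le> f v" if "x \<le> u" "u \<le> v" "v \<le> y" for u v
  proof (rule DERIV_nonneg_imp_nondecreasing[OF that(2)])
    fix w assume "u \<le> w" "w \<le> v"
    with that have "w \<in> {x..y}" by simp
    with xy have "w \<in> S" by blast
    then show "\<exists>z. (f has_real_derivative z) (at w) \<and> 0 \<le> z"
      using der nonneg by blast
  qed
  obtain u where u: "x < u" "u < y" and "f' u \<noteq> 0"
    using nonvanishing[OF x y \<open>x < y\<close>] by auto
  show "f x < f y"
  proof (rule ccontr)
    assume "\<not> f x < f y"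
    then have const: "f v = f x" if "x \<le> v" "v \<le> y" for v
      using mono[of x v] mono[of v y] that by linarith
    have "f' u = 0"
    proof (rule DERIV_local_const[OF der])
      have "u \<in> {x..y}" using u by simp
      with xy show "u \<in> S" by blast
      show "0 < min (u - x) (y - u)" using u by simp
      show "\<forall>v. \<bar>u - v\<bar> < min (u - x) (y - u) \<longrightarrow> f u = f v"
      proof (intro allI impI)
        fix v assume "\<bar>u - v\<bar> < min (u - x) (y - u)"
        then have "x \<le> v" "v \<le> y" by (simp_all add: abs_less_iff)
        with u show "f u = f v" using const[of u] const[of v] by simp
      qed
    qed
    with \<open>f' u \<noteq> 0\<close> show False ..
  qed
qed

lemma integral_le_of_le_mult_deriv:
  fixes f f' :: "real \<Rightarrow> real"
  assumes "s \<le> t"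
    and der: "\<And>x. x \<in> {s..t} \<Longrightarrow> (f has_real_derivative f' x) (at x)"
    and le: "\<And>x. x \<in> {s..t} \<Longrightarrow> f x \<le> C * f' x"
  shows "integral {s..t} f \<le> C * (f t - f s)"
proof -
  have "continuous_on {s..t} f"
    using der by (intro continuous_at_imp_continuous_on) (blast intro: DERIV_isCont)
  then have "(f has_integral integral {s..t} f) {s..t}"
    by (blast intro: integrable_continuous_interval)
  moreover have "(f' has_integral f t - f s) {s..t}"
    using der \<open>s \<le> t\<close>
    by (intro fundamental_theorem_of_calculus)
       (auto simp: has_real_derivative_iff_has_vector_derivative[symmetric] intro: has_field_derivative_at_within)
  then have "((\<lambda>x. C * f' x) has_integral C * (f t - f s)) {s..t}"
    by (rule has_integral_mult_right)
  ultimately show ?thesis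
    using le by (rule has_integral_le)
qed

lemma tendsto_integral_at_bot_shift:
  fixes f :: "real \<Rightarrow> real"
  assumes cont: "continuous_on {..b} f" and "a \<le> b"
  shows "((\<lambda>s. integral {s..b} f) \<longlongrightarrow> c) at_bot \<longleftrightarrow>
         ((\<lambda>s. integral {s..a} f) \<longlongrightarrow> c - integral {a..b} f) at_bot"
proof -
  have "eventually (\<lambda>s. integral {s..b} f - integral {a..b} f = integral {s..a} f) at_bot"
    using eventually_le_at_bot[of a]
  proof (rule eventually_mono)
    fix s assume "s \<le> a"
    moreover have "f integrable_on {s..b}"
      by (rule integrable_continuous_interval, rule continuous_on_subset[OF cont]) auto
    ultimately show "integral {s..b} f - integral {a..b} f = integral {s..a} f"
      using Henstock_Kurzweil_Integration.integral_combine[where a=s and c=a and b=b and f=f] \<open>a \<le> b\<close> by simp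
  qed
  then have "((\<lambda>s. integral {s..a} f) \<longlongrightarrow> c - integral {a..b} f) at_bot \<longleftrightarrow>
             ((\<lambda>s. integral {s..b} f - integral {a..b} f) \<longlongrightarrow> c - integral {a..b} f) at_bot"
    by (intro tendsto_cong) (simp add: eq_commute)
  also have "\<dots> \<longleftrightarrow> ((\<lambda>s. integral {s..b} f) \<longlongrightarrow> c) at_bot"
    using tendsto_add_const_iff[of "- integral {a..b} f" "\<lambda>s. integral {s..b} f" c] by simp
  finally show ?thesis ..
qed

lemma int_minf_converges_iff:
  fixes f :: "real \<Rightarrow> real"
  assumes "continuous_on {..b} f" and "a \<le> b"
  shows "int_minf_converges f a \<longleftrightarrow> int_minf_converges f b"
  unfolding int_minf_converges_def
  using tendsto_integral_at_bot_shift[OF assms] by (metis add_diff_cancel)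

lemma int_minf_split:
  fixes f :: "real \<Rightarrow> real"
  assumes cont: "continuous_on {..b} f" and "a \<le> b" and conv: "int_minf_converges f b"
  shows "int_minf f b = int_minf f a + integral {a..b} f"
proof -
  obtain c where c: "((\<lambda>s. integral {s..b} f) \<longlongrightarrow> c) at_bot"
    using conv unfolding int_minf_converges_def by blast
  then have "((\<lambda>s. integral {s..a} f) \<longlongrightarrow> c - integral {a..b} f) at_bot"
    using tendsto_integral_at_bot_shift[OF cont \<open>a \<le> b\<close>] by blast
  then have "int_minf f a = c - integral {a..b} f"
    unfolding int_minf_def by (rule tendsto_Lim[rotated]) simp
  moreover have "int_minf f b = c"
    unfolding int_minf_def using c by (rule tendsto_Lim[rotated]) simp
  ultimately show ?thesis by simp
qed

lemma int_minf_has_real_derivative: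
  fixes f :: "real \<Rightarrow> real"
  assumes cont: "continuous_on {..c} f" and conv: "int_minf_converges f c" and "t < c"
  shows "(int_minf f has_real_derivative f t) (at t)"
proof -
  define a where "a = t - 1"
  have split: "int_minf f a + integral {a..u} f = int_minf f u" if "u \<in> {a<..<c}" for u
  proof -
    have cont_u: "continuous_on {..u} f"
      using that by (intro continuous_on_subset[OF cont]) auto
    moreover have "int_minf_converges f u"
      using int_minf_converges_iff[OF cont, of u] conv that by simp
    ultimately show ?thesis
      using int_minf_split[OF cont_u, of a] that by simp
  qed
  have "((\<lambda>u. integral {a..u} f) has_real_derivative f t) (at t within {a..c})"
    using \<open>t < c\<close> by (intro integral_has_real_derivative continuous_on_subset[OF cont]) (auto simp: a_def)
  moreover have "at t within {a..c} = at t"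
    using \<open>t < c\<close> by (intro at_within_interior) (simp add: a_def)
  ultimately have "((\<lambda>u. int_minf f a + integral {a..u} f) has_real_derivative f t) (at t)"
    by (auto intro: derivative_eq_intros)
  then show ?thesis
    by (rule has_field_derivative_transform_within_open[of _ _ _ "{a<..<c}"])
       (use \<open>t < c\<close> split in \<open>auto simp: a_def\<close>)
qed

lemma int_minf_converges_if_bounded:
  fixes f :: "real \<Rightarrow> real"
  assumes cont: "continuous_on {..T} f" and nonneg: "\<And>t. t \<le> T \<Longrightarrow> 0 \<le> f t"
    and bound: "\<And>s. s \<le> T \<Longrightarrow> integral {s..T} f \<le> M"
  shows "int_minf_converges f T"
proof -
  define F where "F s = integral {s..T} f" for s
  have antimono: "F v \<le> F s" if "s \<le> v" "v \<le> T" for s v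
  proof -
    have "f integrable_on {s..T}"
      by (rule integrable_continuous_interval, rule continuous_on_subset[OF cont]) auto
    then have "F s = integral {s..v} f + F v"
      using Henstock_Kurzweil_Integration.integral_combine[where a=s and c=v and b=T and f=f] that unfolding F_def by simp
    moreover have "0 \<le> integral {s..v} f"
      using that by (intro integral_nonneg integrable_continuous_interval continuous_on_subset[OF cont] nonneg) auto
    ultimately show ?thesis by simp
  qed
  have bdd: "bdd_above (F ` {..T})"
    using bound unfolding F_def by (intro bdd_aboveI2[of _ _ M]) simp
  have "(F \<longlongrightarrow> (SUP s\<in>{..T}. F s)) at_bot"
  proof (rule order_tendstoI)
    fix y assume "y < (SUP s\<in>{..T}. F s)"
    then obtain s0 where "s0 \<le> T" "y < F s0"
      using less_cSUP_iff[OF _ bdd] by auto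
    then show "eventually (\<lambda>s. y < F s) at_bot"
      unfolding eventually_at_bot_linorder using antimono by (meson order_less_le_trans)
  next
    fix y assume "(SUP s\<in>{..T}. F s) < y"
    moreover have "F s \<le> (SUP s\<in>{..T}. F s)" if "s \<le> T" for s
      using that by (intro cSUP_upper bdd) simp
    ultimately show "eventually (\<lambda>s. F s < y) at_bot"
      unfolding eventually_at_bot_linorder by (meson order_le_less_trans)
  qed
  then show ?thesis
    unfolding int_minf_converges_def F_def by blast
qed

lemma int_minf_pos:
  fixes f :: "real \<Rightarrow> real"
  assumes cont: "continuous_on {..T} f" and pos: "\<And>t. t \<le> T \<Longrightarrow> 0 < f t"
    and conv: "int_minf_converges f T"
  shows "int_minf f T > 0"
proof -
  have cont_unit: "continuous_on {T - 1..T} f"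
    by (rule continuous_on_subset[OF cont]) auto
  then obtain m where m: "m \<in> {T - 1..T}" and m_min: "\<And>t. t \<in> {T - 1..T} \<Longrightarrow> f m \<le> f t"
    using continuous_attains_inf[of "{T - 1..T}" f] by auto
  have "0 < f m" using m pos by simp
  also have "f m = integral {T - 1..T} (\<lambda>_. f m)" by simp
  also have "\<dots> \<le> integral {T - 1..T} f"
    using m_min by (intro integral_le integrable_continuous_interval cont_unit) auto
  finally have unit_pos: "0 < integral {T - 1..T} f" .
  have cont': "continuous_on {..T - 1} f"
    by (rule continuous_on_subset[OF cont]) auto
  obtain c where c: "((\<lambda>s. integral {s..T - 1} f) \<longlongrightarrow> c) at_bot"
    using conv int_minf_converges_iff[OF cont, of "T - 1"] unfolding int_minf_converges_def by auto
  have "eventually (\<lambda>s. 0 \<le> integral {s..T - 1} f) at_bot"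
    using eventually_le_at_bot[of "T - 1"]
    by eventually_elim (intro integral_nonneg integrable_continuous_interval continuous_on_subset[OF cont'], auto intro!: less_imp_le[OF pos])
  with c have "0 \<le> c" by (intro tendsto_lowerbound) auto
  moreover have "int_minf f (T - 1) = c"
    unfolding int_minf_def using c by (rule tendsto_Lim[rotated]) simp
  ultimately show ?thesis
    using int_minf_split[OF cont _ conv, of "T - 1"] unit_pos by simp
qed

locale S_solution =
  fixes d :: nat and q :: real and I :: "real set" and X Y Z W :: "real \<Rightarrow> real"
  assumes d_pos: "d > 0"
    and open_domain: "open I"
    and down_closed: "\<And>s t. t \<in> I \<Longrightarrow> s \<le> t \<Longrightarrow> s \<in> I"
    and solves: "solves_S d q I X Y Z W"
begin

definition growth_rate :: "real \<Rightarrow> real" where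
  "growth_rate t = real d * (X t)^2 + (Z t)^2"

lemma is_interval_domain: "is_interval I"
  unfolding is_interval_1 using down_closed by blast

lemma atMost_subset_domain: "t \<in> I \<Longrightarrow> {..t} \<subseteq> I"
  using down_closed by blast

lemma X_deriv:
  "t \<in> I \<Longrightarrow> (X has_real_derivative X t * (real d * (X t)^2 + (Z t)^2 - 1)
     + A2 d / real d * (Y t)^2 - 2 * A3 d q / real d * (W t)^2) (at t)"
  using solves unfolding solves_S_def by blast

lemma Y_deriv: "t \<in> I \<Longrightarrow> (Y has_real_derivative Y t * (growth_rate t - X t)) (at t)"
  using solves unfolding solves_S_def growth_rate_def by blast

lemma Z_deriv:
  "t \<in> I \<Longrightarrow> (Z has_real_derivative Z t * (real d * (X t)^2 + (Z t)^2 - 1) + A3 d q * (W t)^2) (at t)"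
  using solves unfolding solves_S_def by blast

lemma continuous_on_X: "continuous_on I X"
  using X_deriv by (intro continuous_at_imp_continuous_on) (blast intro: DERIV_isCont)

lemma continuous_on_growth_rate: "continuous_on I growth_rate"
proof -
  have "continuous_on I Z"
    using Z_deriv by (intro continuous_at_imp_continuous_on) (blast intro: DERIV_isCont)
  then show ?thesis
    unfolding growth_rate_def by (intro continuous_intros continuous_on_X)
qed

lemma Y_pos:
  assumes "t0 \<in> I" "Y t0 > 0" "t \<in> I"
  shows "Y t > 0"
  using continuous_on_growth_rate continuous_on_X
  by (intro linear_ode_pos[of I Y "\<lambda>t. growth_rate t - X t", OF is_interval_domain Y_deriv _ assms(1,3,2)])
     (auto intro: continuous_on_diff)

lemma growth_rate_nonvanishing:
  assumes "x < y" and sub: "{x<..<y} \<subseteq> I" and Y_nz: "\<And>u. u \<in> {x<..<y} \<Longrightarrow> Y u \<noteq> 0"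
  shows "\<exists>u\<in>{x<..<y}. growth_rate u \<noteq> 0"
proof (rule ccontr)
  assume "\<not> ?thesis"
  then have rest: "X u = 0 \<and> Z u = 0" if "u \<in> {x<..<y}" for u
    using that d_pos by (auto simp: growth_rate_def add_nonneg_eq_0_iff)
  define m where "m = (x + y) / 2"
  define r where "r = (y - x) / 2"
  have m: "m \<in> {x<..<y}" and "m \<in> I" and "0 < r"
    using \<open>x < y\<close> sub by (auto simp: m_def r_def)
  have near: "v \<in> {x<..<y}" if "\<bar>m - v\<bar> < r" for v
    using that \<open>x < y\<close> by (auto simp: m_def r_def abs_if field_simps split: if_split_asm)
  have "X m * (real d * (X m)^2 + (Z m)^2 - 1) + A2 d / real d * (Y m)^2
          - 2 * A3 d q / real d * (W m)^2 = 0"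
    using rest m near by (intro DERIV_local_const[OF X_deriv[OF \<open>m \<in> I\<close>] \<open>0 < r\<close>]) auto
  moreover have "Z m * (real d * (X m)^2 + (Z m)^2 - 1) + A3 d q * (W m)^2 = 0"
    using rest m near by (intro DERIV_local_const[OF Z_deriv[OF \<open>m \<in> I\<close>] \<open>0 < r\<close>]) auto
  ultimately have "A2 d / real d * (Y m)^2 = 2 * A3 d q / real d * (W m)^2"
    and "A3 d q * (W m)^2 = 0"
    using rest[OF m] by simp_all
  then have "A2 d / real d * (Y m)^2 = 0" by auto
  moreover have "A2 d / real d * (Y m)^2 > 0"
    using d_pos Y_nz[OF m] by (simp add: A2_def)
  ultimately show False by linarith
qed

lemma weighted_Y_deriv:
  assumes g_deriv: "\<And>t. t \<in> I \<Longrightarrow> (g has_real_derivative g t * X t) (at t)" and "t \<in> I"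
  shows "((\<lambda>t. g t * Y t) has_real_derivative g t * Y t * growth_rate t) (at t)"
proof -
  have "((\<lambda>t. g t * Y t) has_real_derivative g t * X t * Y t + Y t * (growth_rate t - X t) * g t) (at t)"
    using g_deriv Y_deriv \<open>t \<in> I\<close> by (blast intro: DERIV_mult)
  then show ?thesis by (simp add: algebra_simps)
qed

lemma strict_mono_on_weighted_Y:
  assumes g_deriv: "\<And>t. t \<in> I \<Longrightarrow> (g has_real_derivative g t * X t) (at t)"
    and g_pos: "\<And>t. t \<in> I \<Longrightarrow> g t > 0" and Y_pos: "\<And>t. t \<in> I \<Longrightarrow> Y t > 0"
  shows "strict_mono_on I (\<lambda>t. g t * Y t)"
proof (rule strict_mono_on_if_deriv_nonneg[OF is_interval_domain weighted_Y_deriv[OF g_deriv]])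
  show "0 \<le> g t * Y t * growth_rate t" if "t \<in> I" for t
    using g_pos[OF that] Y_pos[OF that] by (simp add: growth_rate_def less_imp_le)
next
  fix x y assume "x \<in> I" "y \<in> I" "x < y"
  then have sub: "{x<..<y} \<subseteq> I"
    using atLeastAtMost_subset_interval[OF is_interval_domain] by fastforce
  with Y_pos obtain u where "u \<in> {x<..<y}" "growth_rate u \<noteq> 0"
    using growth_rate_nonvanishing[OF \<open>x < y\<close> sub] by fastforce
  with sub g_pos Y_pos show "\<exists>u\<in>{x<..<y}. g u * Y u * growth_rate u \<noteq> 0"
    by (metis less_irrefl mult_eq_0_iff subsetD)
qed

lemma eventually_growth_rate_ge_half:
  assumes "(Z \<longlongrightarrow> 1) at_bot"
  shows "eventually (\<lambda>t. 1/2 \<le> growth_rate t) at_bot"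
proof -
  have "eventually (\<lambda>t. 3/4 < Z t) at_bot"
    by (rule order_tendstoD(1)[OF assms]) simp
  then show ?thesis
  proof eventually_elim
    case (elim t)
    then have "(3/4)^2 \<le> (Z t)^2" by (intro power_mono) auto
    then have "9/16 \<le> (Z t)^2" by (simp add: power_divide)
    moreover have "0 \<le> real d * (X t)^2" by simp
    ultimately show ?case unfolding growth_rate_def by linarith
  qed
qed

lemma weighted_Y_integrable_at_bot:
  assumes g_deriv: "\<And>t. t \<in> I \<Longrightarrow> (g has_real_derivative g t * X t) (at t)"
    and g_pos: "\<And>t. t \<in> I \<Longrightarrow> g t > 0" and Y_pos: "\<And>t. t \<in> I \<Longrightarrow> Y t > 0"
    and Z_lim: "(Z \<longlongrightarrow> 1) at_bot" and "T0 \<in> I"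
  shows "int_minf_converges (\<lambda>t. g t * Y t) T0 \<and> int_minf (\<lambda>t. g t * Y t) T0 > 0"
proof -
  define L where "L t = g t * Y t" for t
  have L_deriv: "(L has_real_derivative L t * growth_rate t) (at t)" if "t \<in> I" for t
    unfolding L_def using weighted_Y_deriv[OF g_deriv that] .
  have L_pos: "L t > 0" if "t \<in> I" for t
    using g_pos[OF that] Y_pos[OF that] by (simp add: L_def)
  have cont: "continuous_on {..t} L" if "t \<in> I" for t
    using L_deriv atMost_subset_domain[OF that]
    by (intro continuous_at_imp_continuous_on) (blast intro: DERIV_isCont)
  obtain T1 where "T1 \<le> T0" and half: "\<And>t. t \<le> T1 \<Longrightarrow> 1/2 \<le> growth_rate t"
    using eventually_growth_rate_ge_half[OF Z_lim]
    unfolding eventually_at_bot_linorder by (meson min.cobounded1 min.cobounded2 order.trans)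
  have "T1 \<in> I" using down_closed[OF \<open>T0 \<in> I\<close> \<open>T1 \<le> T0\<close>] .
  have bound: "integral {s..T1} L \<le> 2 * L T1" if "s \<le> T1" for s
  proof -
    have "integral {s..T1} L \<le> 2 * (L T1 - L s)"
    proof (rule integral_le_of_le_mult_deriv[OF that L_deriv])
      fix t assume "t \<in> {s..T1}"
      then have "t \<in> I" and "1/2 \<le> growth_rate t"
        using down_closed[OF \<open>T1 \<in> I\<close>] half by auto
      then show "L t \<le> 2 * (L t * growth_rate t)"
        using L_pos[of t] mult_left_mono[of "1/2" "growth_rate t" "L t"] by simp
    qed (use down_closed[OF \<open>T1 \<in> I\<close>] in auto)
    moreover have "L s > 0"
      using L_pos down_closed[OF \<open>T1 \<in> I\<close> that] by simp
    ultimately show ?thesis by simp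
  qed
  have "int_minf_converges L T1"
    using L_pos atMost_subset_domain[OF \<open>T1 \<in> I\<close>] bound
    by (intro int_minf_converges_if_bounded[OF cont[OF \<open>T1 \<in> I\<close>]]) (auto intro: less_imp_le)
  then have "int_minf_converges L T0"
    using int_minf_converges_iff[OF cont[OF \<open>T0 \<in> I\<close>] \<open>T1 \<le> T0\<close>] by simp
  moreover have "int_minf L T0 > 0"
    using L_pos atMost_subset_domain[OF \<open>T0 \<in> I\<close>] calculation
    by (intro int_minf_pos[OF cont[OF \<open>T0 \<in> I\<close>]]) auto
  ultimately show ?thesis unfolding L_def by simp
qed

lemma normalized_weight_deriv:
  assumes "T0 \<in> I" and X_int: "int_minf_converges X T0" and "t \<in> I"
  shows "((\<lambda>t. lam * exp (int_minf X t)) has_real_derivative lam * exp (int_minf X t) * X t) (at t)"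
proof -
  obtain e where "e > 0" "ball t e \<subseteq> I"
    using openE[OF open_domain \<open>t \<in> I\<close>] by blast
  then have "t < t + e/2" "t + e/2 \<in> I"
    by (auto simp: subset_iff dist_real_def)
  then obtain c where "t < c" "c \<in> I" by blast
  have cont: "continuous_on {..u} X" if "u \<in> I" for u
    using continuous_on_subset[OF continuous_on_X atMost_subset_domain[OF that]] .
  have "int_minf_converges X c"
  proof (cases "T0 \<le> c")
    case True
    then show ?thesis using int_minf_converges_iff[OF cont[OF \<open>c \<in> I\<close>]] X_int by blast
  next
    case False
    then show ?thesis using int_minf_converges_iff[OF cont[OF \<open>T0 \<in> I\<close>], of c] X_int by simp
  qed
  from int_minf_has_real_derivative[OF cont[OF \<open>c \<in> I\<close>] this \<open>t < c\<close>]
  have "((\<lambda>t. lam * exp (int_minf X t)) has_real_derivative lam * (exp (int_minf X t) * X t)) (at t)"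
    by (intro DERIV_cmult DERIV_chain2[OF DERIV_exp])
  then show ?thesis by (simp add: mult.assoc)
qed

end

lemma open_ereal_ray: "open {t. ereal t < e}"
  by (intro open_Collect_less continuous_on_ereal continuous_on_id continuous_on_const)

theorem proposition2p2:
  fixes d :: nat and q :: real and tmax :: ereal
    and X Y Z W :: "real \<Rightarrow> real" and lam T0 t0 :: real
  defines "I \<equiv> {t. ereal t < tmax}"
  defines "g \<equiv> (\<lambda>t. lam * exp (int_minf X t))"
  defines "L \<equiv> (\<lambda>t. g t * Y t)"
  assumes d_pos: "d > 0"
    and sol: "solves_S d q I X Y Z W"
    and limX: "(X \<longlongrightarrow> 0) at_bot" and limY: "(Y \<longlongrightarrow> 0) at_bot"
    and limZ: "(Z \<longlongrightarrow> 1) at_bot" and limW: "(W \<longlongrightarrow> 0) at_bot"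
    and T0: "T0 \<in> I" and intX: "int_minf_converges X T0"
    and lam: "lam > 0"
    and t0: "t0 \<in> I" and Yt0: "Y t0 > 0"
  shows "strict_mono_on I L \<and> (\<forall>t\<in>I. L t > 0) \<and>
         int_minf_converges L T0 \<and> int_minf L T0 > 0"
proof -
  interpret S_solution d q I X Y Z W
  proof
    show "open I" unfolding I_def by (rule open_ereal_ray)
    show "s \<in> I" if "t \<in> I" "s \<le> t" for s t
      using that order.strict_trans1[of "ereal s" "ereal t" tmax] unfolding I_def by simp
  qed (fact d_pos sol)+
  have g_deriv: "(g has_real_derivative g t * X t) (at t)" if "t \<in> I" for t
    unfolding g_def using normalized_weight_deriv[OF T0 intX that] .
  have g_pos: "g t > 0" for t
    unfolding g_def using lam by simp
  have Y_pos: "Y t > 0" if "t \<in> I" for t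
    using Y_pos[OF t0 Yt0 that] .
  show ?thesis
    unfolding L_def
    using strict_mono_on_weighted_Y[OF g_deriv g_pos Y_pos]
      weighted_Y_integrable_at_bot[OF g_deriv g_pos Y_pos limZ T0] g_pos Y_pos
    by simp
qed

end
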